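(* Let $\alpha\in(0,\frac{\pi}{2}]$ and let $S$ be a finite set of line segments in the plane such that any two segments of $S$ that cross do so at angle $\alpha$. If $\frac{\pi}{\alpha}$ is irrational, or $\frac{\pi}{\alpha}=\frac{p}{q}$ with $\gcd(p,q)=1$ and $p$ even, then there exists a subset $S'\subset S$ of pairwise noncrossing segments with $|S'|\geq\frac12|S|$. Otherwise $\frac{\pi}{\alpha}=\frac{p}{q}$ with $\gcd(p,q)=1$ and $p=2k+1$ for some $k\in\mathbb{N}$, and then there exists a subset $S'\subset S$ of pairwise noncrossing segments with $|S'|\geq\frac{k}{2k+1}|S|$. This holds under either of the following two notions of crossing.
   Context: Segments in $S$ may overlap (intersect in a segment of positive length). Standard notion: two segments cross if they intersect in a single point lying in the relative interior of both. Relaxed notion: given $S$ and a set $V$ of segment endpoints, two segments of $S$ cross if they intersect in a single point that is not in $V$. Two segments cross at angle $\alpha$ if the lines containing them meet at angle $\alpha$ (equivalently $\pi-\alpha$). *)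

theory Defs
  imports "HOL-Analysis.Analysis"
begin

type_synonym point = "real^2"

definition is_segment :: "point set \<Rightarrow> bool" where
  "is_segment s \<longleftrightarrow> (\<exists>a b. a \<noteq> b \<and> s = closed_segment a b)"

definition seg_endpoints :: "point set set \<Rightarrow> point set" where
  "seg_endpoints S = {a. \<exists>s\<in>S. \<exists>b. a \<noteq> b \<and> s = closed_segment a b}"

definition crosses_std :: "point set \<Rightarrow> point set \<Rightarrow> bool" where
  "crosses_std s t \<longleftrightarrow> (\<exists>x. s \<inter> t = {x} \<and> x \<in> rel_interior s \<and> x \<in> rel_interior t)"

definition crosses_rel :: "point set \<Rightarrow> point set \<Rightarrow> point set \<Rightarrow> bool" where
  "crosses_rel V s t \<longleftrightarrow> (\<exists>x. s \<inter> t = {x} \<and> x \<notin> V)"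

definition vec_angle :: "point \<Rightarrow> point \<Rightarrow> real" where
  "vec_angle u v = arccos ((u \<bullet> v) / (norm u * norm v))"

text \<open>The lines containing segments s and t meet at angle alpha (equivalently pi - alpha).\<close>
definition seg_angle_is :: "real \<Rightarrow> point set \<Rightarrow> point set \<Rightarrow> bool" where
  "seg_angle_is \<alpha> s t \<longleftrightarrow> (\<exists>a b c d. a \<noteq> b \<and> c \<noteq> d \<and> s = closed_segment a b \<and> t = closed_segment c d \<and>
      (vec_angle (b - a) (d - c) = \<alpha> \<or> vec_angle (b - a) (d - c) = pi - \<alpha>))"

definition noncrossing :: "(point set \<Rightarrow> point set \<Rightarrow> bool) \<Rightarrow> point set set \<Rightarrow> bool" where
  "noncrossing cr S' \<longleftrightarrow> (\<forall>s\<in>S'. \<forall>t\<in>S'. \<not> cr s t)"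

end

theory Submission
  imports Defs
begin

text \<open>Measure the direction of every segment by an angle modulo \<open>\<pi>\<close>; crossing segments have
  directions differing by \<open>\<plusminus>\<alpha>\<close> modulo \<open>\<pi>\<close>. Fixing a base point in every coset of the group
  \<open>\<int>\<alpha> + \<int>\<pi>\<close> and writing each direction as base point \<open>+ J\<alpha> + m\<pi>\<close>, the integer labels \<open>J\<close> of
  crossing segments satisfy \<open>(J t - J s \<mp> 1) \<alpha> \<in> \<int>\<pi>\<close>. If \<open>\<pi>/\<alpha>\<close> is irrational this forces
  \<open>J t - J s = \<plusminus>1\<close>, and if \<open>\<pi>/\<alpha> = p/q\<close> it forces \<open>J t \<equiv> J s \<plusminus> 1 (mod p)\<close>; for even \<open>p\<close> crossing
  segments thus have labels of opposite parity and the larger parity class is noncrossing.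
  For \<open>p = 2k + 1\<close>, delete the least populous residue class of \<open>J\<close> modulo \<open>p\<close>
  (at most \<open>|S|/p\<close> segments); reading the remaining labels in \<open>{1..2k}\<close>, crossing segments have
  labels differing by exactly \<open>\<plusminus>1\<close>, and the parity argument applies to them.\<close>

definition is_polar_angle :: "point \<Rightarrow> real \<Rightarrow> bool" where
  "is_polar_angle u \<theta> \<longleftrightarrow> u$1 = norm u * cos \<theta> \<and> u$2 = norm u * sin \<theta>"

lemma ex_polar_angle: "\<exists>\<theta>. is_polar_angle u \<theta>"
proof -
  define z where "z = Complex (u$1) (u$2)"
  have "norm u = sqrt (u$1^2 + u$2^2)"
    by (simp add: norm_eq_sqrt_inner inner_vec_def sum_2 power2_eq_square)
  then have "norm u = cmod z"
    by (simp add: z_def complex_norm)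
  then show ?thesis
    using cos_Arg2pi[of z] sin_Arg2pi[of z] unfolding is_polar_angle_def z_def by (metis complex.sel)
qed

lemma inner_polar_angle:
  assumes "is_polar_angle u a" "is_polar_angle v b"
  shows "u \<bullet> v = norm u * norm v * cos (a - b)"
  using assms by (simp add: is_polar_angle_def inner_vec_def sum_2 cos_diff algebra_simps)

lemma cos_vec_angle_polar:
  assumes "u \<noteq> 0" "v \<noteq> 0" "is_polar_angle u a" "is_polar_angle v b"
  shows "cos (vec_angle u v) = cos (a - b)"
  using assms by (simp add: vec_angle_def inner_polar_angle cos_arccos)

lemma polar_angle_unique:
  assumes "u \<noteq> 0" "is_polar_angle u a" "is_polar_angle u b"
  shows "\<exists>n::int. b = a + 2 * pi * n"
proof -
  have "cos b = cos a \<and> sin b = sin a"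
    using assms by (auto simp: is_polar_angle_def)
  then show ?thesis
    using sin_cos_eq_iff by blast
qed

lemma polar_angle_uminus: "is_polar_angle u a \<Longrightarrow> is_polar_angle (- u) (a + pi)"
  by (simp add: is_polar_angle_def)

lemma cos_eq_imp_sign_multiple_pi:
  fixes x y :: real
  assumes "cos x = cos y"
  shows "\<exists>e\<in>{1,-1::int}. \<exists>m::int. x = e * y + m * pi"
proof -
  obtain n where "n \<in> \<int>" "x = y + 2*n*pi \<or> x = -y + 2*n*pi"
    using assms by (auto simp: cos_eq)
  moreover from \<open>n \<in> \<int>\<close> obtain m :: int where "n = m"
    by (auto elim: Ints_cases)
  ultimately have "x = 1 * y + of_int (2*m) * pi \<or> x = (-1) * y + of_int (2*m) * pi"
    by auto
  then show ?thesis
    by (metis insert_iff of_int_1 of_int_minus)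
qed

lemma polar_angle_diff_of_vec_angle:
  assumes "u \<noteq> 0" "v \<noteq> 0" "is_polar_angle u a" "is_polar_angle v b"
    and "vec_angle u v = \<alpha> \<or> vec_angle u v = pi - \<alpha>"
  shows "\<exists>e\<in>{1,-1::int}. \<exists>m::int. b - a = e * \<alpha> + m * pi"
proof -
  have "cos (b - a) = cos \<alpha> \<or> cos (b - a) = cos (pi - \<alpha>)"
    using assms cos_vec_angle_polar[OF assms(1-4)] by (metis cos_minus minus_diff_eq)
  then show ?thesis
  proof
    assume "cos (b - a) = cos \<alpha>"
    then show ?thesis
      using cos_eq_imp_sign_multiple_pi by blast
  next
    assume "cos (b - a) = cos (pi - \<alpha>)"
    then obtain e m :: int where "e \<in> {1,-1}" "b - a = e * (pi - \<alpha>) + m * pi"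
      using cos_eq_imp_sign_multiple_pi by blast
    then have "- e \<in> {1,-1}" "b - a = of_int (- e) * \<alpha> + of_int (e + m) * pi"
      by (auto simp: algebra_simps)
    then show ?thesis
      by blast
  qed
qed

text \<open>Well defined modulo \<open>\<pi>\<close> only: reversing the segment shifts the polar angle by \<open>\<pi>\<close>.\<close>

definition seg_dir :: "point set \<Rightarrow> real" where
  "seg_dir s = (SOME \<theta>. \<exists>a b. a \<noteq> b \<and> s = closed_segment a b \<and> is_polar_angle (b - a) \<theta>)"

lemma seg_dir_cong:
  assumes "a \<noteq> b" "s = closed_segment a b" "is_polar_angle (b - a) \<theta>"
  shows "\<exists>m::int. seg_dir s = \<theta> + m * pi"
proof -
  obtain c d where cd: "c \<noteq> d" "s = closed_segment c d" "is_polar_angle (d - c) (seg_dir s)"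
    using someI[of "\<lambda>\<theta>. \<exists>a b. a \<noteq> b \<and> s = closed_segment a b \<and> is_polar_angle (b - a) \<theta>"]
      assms unfolding seg_dir_def by blast
  have "{a, b} = {c, d}"
    using assms(2) cd(2) by simp
  then consider "d - c = b - a" | "d - c = - (b - a)"
    by (auto simp: doubleton_eq_iff)
  then show ?thesis
  proof cases
    case 1
    then obtain n :: int where "seg_dir s = \<theta> + 2 * pi * n"
      using polar_angle_unique[of "b - a" \<theta> "seg_dir s"] assms cd(3) by auto
    then have "seg_dir s = \<theta> + of_int (2 * n) * pi"
      by simp
    then show ?thesis ..
  next
    case 2
    then obtain n :: int where "seg_dir s = (\<theta> + pi) + 2 * pi * n"
      using polar_angle_unique[of "d - c" "\<theta> + pi" "seg_dir s"] polar_angle_uminus[OF assms(3)]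
        assms(1) cd(3) by auto
    then have "seg_dir s = \<theta> + of_int (2 * n + 1) * pi"
      by (simp add: algebra_simps)
    then show ?thesis ..
  qed
qed

lemma seg_dir_diff_of_seg_angle:
  assumes "seg_angle_is \<alpha> s t"
  shows "\<exists>e\<in>{1,-1::int}. \<exists>m::int. seg_dir t - seg_dir s = e * \<alpha> + m * pi"
proof -
  obtain a b c d where h: "a \<noteq> b" "c \<noteq> d" "s = closed_segment a b" "t = closed_segment c d"
      "vec_angle (b - a) (d - c) = \<alpha> \<or> vec_angle (b - a) (d - c) = pi - \<alpha>"
    using assms unfolding seg_angle_is_def by blast
  obtain x y where xy: "is_polar_angle (b - a) x" "is_polar_angle (d - c) y"
    using ex_polar_angle by blast
  have "b - a \<noteq> 0" "d - c \<noteq> 0"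
    using h(1,2) by auto
  then obtain e m :: int where "e \<in> {1,-1}" "y - x = e * \<alpha> + m * pi"
    using polar_angle_diff_of_vec_angle[OF _ _ xy h(5)] by blast
  moreover obtain m1 m2 :: int where "seg_dir s = x + m1 * pi" "seg_dir t = y + m2 * pi"
    using seg_dir_cong h(1-4) xy by metis
  ultimately have "seg_dir t - seg_dir s = e * \<alpha> + of_int (m + m2 - m1) * pi"
    by (simp add: algebra_simps)
  with \<open>e \<in> {1,-1}\<close> show ?thesis
    by blast
qed

definition int_span :: "real \<Rightarrow> real \<Rightarrow> real set" where
  "int_span \<alpha> \<beta> = {of_int n * \<alpha> + of_int m * \<beta> | n m :: int. True}"

lemma int_span_shift:
  assumes "\<theta>' - \<theta> = of_int n * \<alpha> + of_int m * \<beta>"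
  shows "\<theta>' - x \<in> int_span \<alpha> \<beta> \<longleftrightarrow> \<theta> - x \<in> int_span \<alpha> \<beta>"
proof
  assume "\<theta>' - x \<in> int_span \<alpha> \<beta>"
  then obtain n' m' :: int where "\<theta>' - x = of_int n' * \<alpha> + of_int m' * \<beta>"
    by (auto simp: int_span_def)
  with assms have "\<theta> - x = of_int (n' - n) * \<alpha> + of_int (m' - m) * \<beta>"
    by (simp add: algebra_simps)
  then show "\<theta> - x \<in> int_span \<alpha> \<beta>"
    unfolding int_span_def by blast
next
  assume "\<theta> - x \<in> int_span \<alpha> \<beta>"
  then obtain n' m' :: int where "\<theta> - x = of_int n' * \<alpha> + of_int m' * \<beta>"
    by (auto simp: int_span_def)
  with assms have "\<theta>' - x = of_int (n' + n) * \<alpha> + of_int (m' + m) * \<beta>"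
    by (simp add: algebra_simps)
  then show "\<theta>' - x \<in> int_span \<alpha> \<beta>"
    unfolding int_span_def by blast
qed

text \<open>A fixed base point of the coset \<open>\<theta> + \<int>\<alpha> + \<int>\<beta>\<close>, and the coefficient of \<open>\<alpha>\<close> in the offset
  of \<open>\<theta>\<close> from it. When \<open>\<alpha>\<close> and \<open>\<beta>\<close> are commensurable this coefficient is determined only
  up to multiples of \<open>\<beta>/\<alpha>\<close>.\<close>

definition span_base :: "real \<Rightarrow> real \<Rightarrow> real \<Rightarrow> real" where
  "span_base \<alpha> \<beta> \<theta> = (SOME x. \<theta> - x \<in> int_span \<alpha> \<beta>)"

definition span_index :: "real \<Rightarrow> real \<Rightarrow> real \<Rightarrow> int" where
  "span_index \<alpha> \<beta> \<theta> = (SOME n. \<exists>m::int. \<theta> - span_base \<alpha> \<beta> \<theta> = of_int n * \<alpha> + of_int m * \<beta>)"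

lemma span_index_spec:
  "\<exists>m::int. \<theta> - span_base \<alpha> \<beta> \<theta> = of_int (span_index \<alpha> \<beta> \<theta>) * \<alpha> + of_int m * \<beta>"
proof -
  have "\<theta> - \<theta> \<in> int_span \<alpha> \<beta>"
    unfolding int_span_def by (auto intro!: exI[of _ 0])
  then have "\<theta> - span_base \<alpha> \<beta> \<theta> \<in> int_span \<alpha> \<beta>"
    unfolding span_base_def by (rule someI)
  then have "\<exists>n m::int. \<theta> - span_base \<alpha> \<beta> \<theta> = of_int n * \<alpha> + of_int m * \<beta>"
    by (auto simp: int_span_def)
  then show ?thesis
    unfolding span_index_def by (rule someI_ex)
qed

lemma span_index_diff:
  assumes "\<theta>' - \<theta> = of_int n * \<alpha> + of_int m * \<beta>"
  shows "\<exists>m'::int. of_int (span_index \<alpha> \<beta> \<theta>' - span_index \<alpha> \<beta> \<theta> - n) * \<alpha> = of_int m' * \<beta>"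
proof -
  have "span_base \<alpha> \<beta> \<theta>' = span_base \<alpha> \<beta> \<theta>"
    unfolding span_base_def using int_span_shift[OF assms] by simp
  moreover obtain m1 m2 :: int where
    "\<theta> - span_base \<alpha> \<beta> \<theta> = of_int (span_index \<alpha> \<beta> \<theta>) * \<alpha> + of_int m1 * \<beta>"
    "\<theta>' - span_base \<alpha> \<beta> \<theta>' = of_int (span_index \<alpha> \<beta> \<theta>') * \<alpha> + of_int m2 * \<beta>"
    using span_index_spec by metis
  ultimately have "of_int (span_index \<alpha> \<beta> \<theta>' - span_index \<alpha> \<beta> \<theta> - n) * \<alpha> = of_int (m - m2 + m1) * \<beta>"
    using assms by (simp add: algebra_simps)
  then show ?thesis ..
qed

lemma seg_angle_span_index:
  assumes "seg_angle_is \<alpha> s t"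
  shows "\<exists>e\<in>{1,-1::int}. \<exists>m::int.
    of_int (span_index \<alpha> pi (seg_dir t) - span_index \<alpha> pi (seg_dir s) - e) * \<alpha> = of_int m * pi"
proof -
  obtain e m :: int where "e \<in> {1,-1}" "seg_dir t - seg_dir s = e * \<alpha> + m * pi"
    using seg_dir_diff_of_seg_angle[OF assms] by blast
  then show ?thesis
    using span_index_diff by blast
qed

lemma int_multiple_eq_imp_zero:
  fixes \<alpha> \<beta> :: real
  assumes "\<beta> / \<alpha> \<notin> \<rat>" "of_int k * \<alpha> = of_int m * \<beta>"
  shows "k = 0"
proof (rule ccontr)
  assume "k \<noteq> 0"
  moreover have "\<alpha> \<noteq> 0"
    using assms(1) by auto
  ultimately have "m \<noteq> 0"
    using assms(2) by auto
  with \<open>\<alpha> \<noteq> 0\<close> have "\<beta> / \<alpha> = of_int k / of_int m"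
    using assms(2) by (simp add: field_simps)
  with assms(1) show False
    by simp
qed

lemma int_multiple_eq_imp_dvd:
  fixes \<alpha> \<beta> :: real and p q :: nat
  assumes "\<alpha> \<noteq> 0" "q > 0" "coprime p q" "\<beta> / \<alpha> = real p / real q"
    and "of_int k * \<alpha> = of_int m * \<beta>"
  shows "int p dvd k"
proof -
  have "\<beta> * real q = real p * \<alpha>"
    using assms(1,2,4) by (simp add: field_simps)
  then have "(of_int k * real q) * \<alpha> = (of_int m * real p) * \<alpha>"
    using assms(5) by (metis mult.assoc mult.commute)
  then have "k * int q = m * int p"
    using assms(1) by (metis mult_right_cancel of_int_eq_iff of_int_mult of_int_of_nat_eq)
  then have "int p dvd k * int q"
    by simp
  moreover have "coprime (int p) (int q)"
    using assms(3) by simp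
  ultimately show ?thesis
    using coprime_dvd_mult_left_iff by blast
qed

lemma odd_of_int_multiple_eq:
  fixes \<alpha> \<beta> :: real and d e m :: int
  assumes "\<alpha> \<noteq> 0"
    and "\<beta> / \<alpha> \<notin> \<rat> \<or> (\<exists>p q :: nat. q > 0 \<and> coprime p q \<and> \<beta> / \<alpha> = real p / real q \<and> even p)"
    and "e \<in> {1,-1}" "of_int (d - e) * \<alpha> = of_int m * \<beta>"
  shows "odd d"
proof -
  from assms(2) have "even (d - e)"
  proof
    assume "\<beta> / \<alpha> \<notin> \<rat>"
    then show ?thesis
      using int_multiple_eq_imp_zero[OF _ assms(4)] by simp
  next
    assume "\<exists>p q :: nat. q > 0 \<and> coprime p q \<and> \<beta> / \<alpha> = real p / real q \<and> even p"
    then obtain p q :: nat where pq: "q > 0" "coprime p q" "\<beta> / \<alpha> = real p / real q" "even p"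
      by blast
    then have "int p dvd d - e"
      using int_multiple_eq_imp_dvd[OF assms(1) _ _ _ assms(4)] by blast
    with \<open>even p\<close> show ?thesis
      by (meson dvd_trans even_of_nat_iff)
  qed
  with assms(3) show ?thesis
    by auto
qed

lemma ex_noncrossing_half_of_odd_label_diff:
  fixes J :: "point set \<Rightarrow> int"
  assumes "finite S" "\<forall>s\<in>S. \<forall>t\<in>S. cr s t \<longrightarrow> odd (J t - J s)"
  shows "\<exists>S' \<subseteq> S. noncrossing cr S' \<and> real (card S') \<ge> real (card S) / 2"
proof -
  define A where "A = {s\<in>S. even (J s)}"
  define B where "B = {s\<in>S. odd (J s)}"
  have "A \<union> B = S" "A \<inter> B = {}"
    unfolding A_def B_def by auto
  then have card: "card A + card B = card S"
    using assms(1) card_Un_disjoint[of A B] by (metis finite_Un)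
  have sub: "A \<subseteq> S" "B \<subseteq> S" and nc: "noncrossing cr A" "noncrossing cr B"
    using assms(2) unfolding noncrossing_def A_def B_def by fastforce+
  show ?thesis
  proof (cases "card B \<le> card A")
    case True
    with card sub(1) nc(1) show ?thesis
      by (intro exI[of _ A]) auto
  next
    case False
    with card sub(2) nc(2) show ?thesis
      by (intro exI[of _ B]) auto
  qed
qed

lemma ex_small_fibre:
  assumes "finite S" "finite I" "I \<noteq> {}" "f ` S \<subseteq> I"
  shows "\<exists>i\<in>I. card I * card {s\<in>S. f s = i} \<le> card S"
proof -
  define g where "g i = card {s\<in>S. f s = i}" for i
  define i where "i = arg_min_on g I"
  have "i \<in> I"
    unfolding i_def using arg_min_if_finite(1)[OF assms(2,3)] .
  have "g i \<le> g j" if "j \<in> I" for j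
    unfolding i_def using arg_min_least[OF assms(2,3) that] .
  then have "card I * g i \<le> (\<Sum>j\<in>I. g j)"
    using sum_bounded_below[of I "g i" g] by simp
  also have "\<dots> = card S"
    using sum_fun_comp[OF assms(1,2,4), of "\<lambda>_. 1::nat"] by (simp add: g_def)
  finally show ?thesis
    using \<open>i \<in> I\<close> unfolding g_def by blast
qed

lemma ex_noncrossing_of_odd_modulus:
  fixes J :: "point set \<Rightarrow> int" and k :: nat
  assumes "finite S"
    and "\<forall>s\<in>S. \<forall>t\<in>S. cr s t \<longrightarrow> (\<exists>e\<in>{1,-1}. int (2 * k + 1) dvd (J t - J s - e))"
  shows "\<exists>S' \<subseteq> S. noncrossing cr S' \<and> real (card S') \<ge> real k / real (2 * k + 1) * real (card S)"
proof -
  define p :: int where "p = int (2 * k + 1)"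
  have "{0..<p} \<noteq> {}" "(\<lambda>s. J s mod p) ` S \<subseteq> {0..<p}"
    by (auto simp: p_def)
  then obtain c where c: "c \<in> {0..<p}" "card {0..<p} * card {s\<in>S. J s mod p = c} \<le> card S"
    using ex_small_fibre[OF assms(1) finite_atLeastLessThan_int] by blast
  define C where "C = {s\<in>S. J s mod p = c}"
  define j where "j s = (J s - c) mod p" for s
  have j_range: "1 \<le> j s \<and> j s \<le> 2 * int k" if "s \<in> S - C" for s
  proof -
    have "j s \<noteq> 0"
      using that c(1) unfolding C_def j_def by (metis (mono_tags) DiffE atLeastLessThan_iff
          dvd_eq_mod_eq_0 mem_Collect_eq mod_eq_dvd_iff mod_pos_pos_trivial)
    moreover have "0 \<le> j s" "j s < p"
      unfolding j_def p_def by simp_all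
    ultimately show ?thesis
      unfolding p_def by linarith
  qed
  have "odd (j t - j s)" if st: "s \<in> S - C" "t \<in> S - C" and "cr s t" for s t
  proof -
    have "s \<in> S" "t \<in> S"
      using st by simp_all
    then obtain e where e: "e \<in> {1,-1}" "p dvd (J t - J s - e)"
      using assms(2) \<open>cr s t\<close> unfolding p_def by blast
    have "(j t - j s - e) mod p = ((J t - c) - (J s - c) - e) mod p"
      unfolding j_def by (metis mod_diff_eq mod_diff_left_eq)
    with e(2) have "p dvd (j t - j s - e)"
      by (simp add: dvd_eq_mod_eq_0)
    moreover have "\<bar>j t - j s - e\<bar> < p"
      using j_range[OF st(1)] j_range[OF st(2)] e(1) unfolding p_def by auto
    ultimately have "j t - j s - e = 0"
      using dvd_imp_le_int[of "j t - j s - e" p] by auto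
    with e(1) show ?thesis
      by auto
  qed
  then obtain S' where S': "S' \<subseteq> S - C" "noncrossing cr S'" "real (card S') \<ge> real (card (S - C)) / 2"
    using ex_noncrossing_half_of_odd_label_diff[of "S - C" cr j] assms(1) by blast
  have "card {0..<p} = 2 * k + 1"
    by (simp add: p_def)
  with c(2) have "(2 * k + 1) * card C \<le> card S"
    unfolding C_def by simp
  then have small_C: "real (card C) \<le> real (card S) / real (2 * k + 1)"
    by (simp add: field_simps flip: of_nat_mult)
  have "2 * (real k / real (2 * k + 1) * real (card S)) = real (card S) - real (card S) / real (2 * k + 1)"
    by (simp add: field_simps)
  also have "\<dots> \<le> real (card S) - real (card C)"
    using small_C by linarith
  also have "\<dots> = real (card (S - C))"
    using assms(1) by (simp add: C_def card_Diff_subset of_nat_diff card_mono)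
  finally have "real k / real (2 * k + 1) * real (card S) \<le> real (card S')"
    using S'(3) by linarith
  moreover have "S' \<subseteq> S"
    using S'(1) by blast
  ultimately show ?thesis
    using S'(2) by blast
qed

theorem lemma15:
  fixes \<alpha> :: real and S :: "point set set" and cr :: "point set \<Rightarrow> point set \<Rightarrow> bool"
  assumes "0 < \<alpha>" "\<alpha> \<le> pi / 2"
    and "finite S" "\<forall>s\<in>S. is_segment s"
    and "cr = crosses_std \<or> (\<exists>V. V \<subseteq> seg_endpoints S \<and> cr = crosses_rel V)"
    and "\<forall>s\<in>S. \<forall>t\<in>S. cr s t \<longrightarrow> seg_angle_is \<alpha> s t"
  shows "((pi / \<alpha> \<notin> \<rat> \<or> (\<exists>p q :: nat. q > 0 \<and> coprime p q \<and> pi / \<alpha> = real p / real q \<and> even p)) \<longrightarrow>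
           (\<exists>S' \<subseteq> S. noncrossing cr S' \<and> real (card S') \<ge> real (card S) / 2)) \<and>
         (\<forall>p q k :: nat. q > 0 \<and> coprime p q \<and> pi / \<alpha> = real p / real q \<and> p = 2 * k + 1 \<longrightarrow>
           (\<exists>S' \<subseteq> S. noncrossing cr S' \<and> real (card S') \<ge> real k / real (2 * k + 1) * real (card S)))"
proof -
  define J where "J s = span_index \<alpha> pi (seg_dir s)" for s
  have \<alpha>: "\<alpha> \<noteq> 0"
    using assms(1) by simp
  have cross: "\<exists>e\<in>{1,-1::int}. \<exists>m::int. of_int (J t - J s - e) * \<alpha> = of_int m * pi"
    if "s \<in> S" "t \<in> S" "cr s t" for s t
    using seg_angle_span_index assms(6) that unfolding J_def by blast
  show ?thesis
  proof (intro conjI impI allI)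
    assume "pi / \<alpha> \<notin> \<rat> \<or> (\<exists>p q :: nat. q > 0 \<and> coprime p q \<and> pi / \<alpha> = real p / real q \<and> even p)"
    then have "\<forall>s\<in>S. \<forall>t\<in>S. cr s t \<longrightarrow> odd (J t - J s)"
      using cross odd_of_int_multiple_eq[OF \<alpha>] by metis
    then show "\<exists>S' \<subseteq> S. noncrossing cr S' \<and> real (card S') \<ge> real (card S) / 2"
      using ex_noncrossing_half_of_odd_label_diff[OF assms(3)] by blast
  next
    fix p q k :: nat
    assume "q > 0 \<and> coprime p q \<and> pi / \<alpha> = real p / real q \<and> p = 2 * k + 1"
    then have "\<forall>s\<in>S. \<forall>t\<in>S. cr s t \<longrightarrow> (\<exists>e\<in>{1,-1}. int (2 * k + 1) dvd (J t - J s - e))"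
      using cross int_multiple_eq_imp_dvd[OF \<alpha>] by metis
    then show "\<exists>S' \<subseteq> S. noncrossing cr S' \<and> real (card S') \<ge> real k / real (2 * k + 1) * real (card S)"
      using ex_noncrossing_of_odd_modulus[OF assms(3)] by blast
  qed
qed

end
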